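(* Let the contents be $\mathcal{C}=\{1,\dots,C\}$ with normalized popularities $\hat\nu_1\ge\hat\nu_2\ge\dots\ge\hat\nu_C>0$, $\sum_c\hat\nu_c=1$, let $\rho>0$, $\rho_c=\rho\hat\nu_c$, and let $M\ge1$ be an integer. Consider the linear program (OPT 2) $$\max_{\tilde{\mathbf m},\boldsymbol\lambda,\mathbf x}\ \sum_{c\in\mathcal{C}}(\rho_c\tilde m_c+x_c)$$ subject to: for all $c$, $0\le\tilde m_c\le1$, $0\le\lambda_c\le\tilde m_c$, $0\le x_c\le\lambda_c$, $x_c\le\rho_c(1-\tilde m_c)$; and $\sum_c\tilde m_c=M$, $\sum_c\lambda_c\le1$. Let $c^*$ be the index such that $\sum_{c=M}^{c^*}\frac{\rho_c}{1+\rho_c}\le1$ but $\sum_{c=M}^{c^*+1}\frac{\rho_c}{1+\rho_c}>1$. Then the following is an optimal solution of OPT 2: (i) for $1\le c\le M-1$: $\tilde m_c=1$, $\lambda_c=x_c=0$; (ii) for $M\le c\le c^*$: $\tilde m_c=\lambda_c=x_c=\rho_c/(1+\rho_c)$; (iii) for $c=c^*+1$: $\tilde m_c=\lambda_c=x_c=1-\sum_{c'=M}^{c^*}\tilde m_{c'}$; (iv) for $c^*+2\le c\le C$: $\tilde m_c=\lambda_c=x_c=0$.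
   Context: In the pure peer-to-peer setting, $\tilde m_c$ is the fraction of boxes caching content $c$, $\lambda_c$ the fraction of total upload bandwidth devoted to content $c$, and $\rho_c$ the (normalized) traffic load of requests for $c$. *)

theory Defs
  imports Complex_Main
begin

text \<open>Contents are indexed by 1..C; vectors are functions nat => real, only
  their values on {1..C} matter.  r c is the traffic load rho_c.\<close>

definition opt2_feasible ::
  "nat \<Rightarrow> nat \<Rightarrow> (nat \<Rightarrow> real) \<Rightarrow> (nat \<Rightarrow> real) \<Rightarrow> (nat \<Rightarrow> real) \<Rightarrow> (nat \<Rightarrow> real) \<Rightarrow> bool" where
  "opt2_feasible C M r m lam x \<longleftrightarrow>
     (\<forall>c\<in>{1..C}. 0 \<le> m c \<and> m c \<le> 1 \<and> 0 \<le> lam c \<and> lam c \<le> m c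
                 \<and> 0 \<le> x c \<and> x c \<le> lam c \<and> x c \<le> r c * (1 - m c))
     \<and> (\<Sum>c=1..C. m c) = real M \<and> (\<Sum>c=1..C. lam c) \<le> 1"

definition opt2_obj :: "nat \<Rightarrow> (nat \<Rightarrow> real) \<Rightarrow> (nat \<Rightarrow> real) \<Rightarrow> (nat \<Rightarrow> real) \<Rightarrow> real" where
  "opt2_obj C r m x = (\<Sum>c=1..C. r c * m c + x c)"

definition opt2_optimal ::
  "nat \<Rightarrow> nat \<Rightarrow> (nat \<Rightarrow> real) \<Rightarrow> (nat \<Rightarrow> real) \<Rightarrow> (nat \<Rightarrow> real) \<Rightarrow> (nat \<Rightarrow> real) \<Rightarrow> bool" where
  "opt2_optimal C M r m lam x \<longleftrightarrow> opt2_feasible C M r m lam x \<and>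
     (\<forall>m' lam' x'. opt2_feasible C M r m' lam' x' \<longrightarrow> opt2_obj C r m' x' \<le> opt2_obj C r m x)"

definition opt2_tail :: "(nat \<Rightarrow> real) \<Rightarrow> nat \<Rightarrow> nat \<Rightarrow> nat \<Rightarrow> real" where
  "opt2_tail r M cs c =
     (if M \<le> c \<and> c \<le> cs then r c / (1 + r c)
      else if c = cs + 1 then 1 - (\<Sum>c'=M..cs. r c' / (1 + r c'))
      else 0)"

definition opt2_m :: "(nat \<Rightarrow> real) \<Rightarrow> nat \<Rightarrow> nat \<Rightarrow> nat \<Rightarrow> real" where
  "opt2_m r M cs c = (if 1 \<le> c \<and> c \<le> M - 1 then 1 else opt2_tail r M cs c)"

definition opt2_lx :: "(nat \<Rightarrow> real) \<Rightarrow> nat \<Rightarrow> nat \<Rightarrow> nat \<Rightarrow> real" where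
  "opt2_lx r M cs c = (if 1 \<le> c \<and> c \<le> M - 1 then 0 else opt2_tail r M cs c)"

end

theory Submission
  imports Defs
begin

text \<open>LP duality. Give the cache constraint the multiplier \<mu> = \<eta> \<rho>_M and the bandwidth
  constraint the multiplier \<eta> = (1 + \<rho>_(c*+1)) / (1 + \<rho>_M) \<in> [0, 1]. The Lagrangian then
  decouples over the contents, and by the ordering of the loads the local maximum of content c
  is attained by full caching for c < M, at m = \<lambda> = x = \<rho>_c / (1 + \<rho>_c) for M \<le> c \<le> c*,
  and by the empty allocation for c > c*; for c = c* + 1 we have \<mu> + \<eta> = 1 + \<rho>_c, so the whole
  diagonal m = \<lambda> = x is optimal and the residual value can be put there. The candidate is
  feasible and attains every local maximum, hence the dual bound.\<close>

lemma antimono_on_atLeastAtMostI: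
  fixes f :: "nat \<Rightarrow> 'a::order"
  assumes "\<And>n. a \<le> n \<Longrightarrow> n < b \<Longrightarrow> f (Suc n) \<le> f n"
  shows "antimono_on {a..b} f"
proof (rule monotone_onI)
  fix i j assume "i \<in> {a..b}" "j \<in> {a..b}" "i \<le> j"
  from \<open>i \<le> j\<close> \<open>j \<in> {a..b}\<close> show "f j \<le> f i"
  proof (induction j rule: dec_induct)
    case (step n)
    then have "f (Suc n) \<le> f n" using \<open>i \<in> {a..b}\<close> by (intro assms) auto
    with step \<open>i \<in> {a..b}\<close> show ?case by (auto intro: order_trans)
  qed simp
qed

definition opt2_local_feasible :: "real \<Rightarrow> real \<Rightarrow> real \<Rightarrow> real \<Rightarrow> bool" where
  "opt2_local_feasible a m lam x \<longleftrightarrow>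
     0 \<le> m \<and> m \<le> 1 \<and> 0 \<le> lam \<and> lam \<le> m \<and> 0 \<le> x \<and> x \<le> lam \<and> x \<le> a * (1 - m)"

lemma opt2_feasible_iff_local:
  "opt2_feasible C M r m lam x \<longleftrightarrow>
     (\<forall>c\<in>{1..C}. opt2_local_feasible (r c) (m c) (lam c) (x c))
     \<and> (\<Sum>c=1..C. m c) = real M \<and> (\<Sum>c=1..C. lam c) \<le> 1"
  unfolding opt2_feasible_def opt2_local_feasible_def ..

lemma opt2_local_feasible_diagI:
  assumes "0 \<le> a" "0 \<le> t" "t * (1 + a) \<le> a"
  shows "opt2_local_feasible a t t t"
proof -
  have "t \<le> 1"
  proof (rule ccontr)
    assume "\<not> t \<le> 1"
    then have "1 + a < t * (1 + a)" using assms(1) by (simp add: mult_less_cancel_right1 add_pos_nonneg)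
    then show False using assms(3) by linarith
  qed
  then show ?thesis using assms unfolding opt2_local_feasible_def by (simp add: algebra_simps)
qed

lemma opt2_local_bound_cached:
  assumes "opt2_local_feasible a m lam x" "0 \<le> \<eta>" "\<eta> \<le> 1" "\<mu> \<le> \<eta> * a"
  shows "a * m + x \<le> \<mu> * m + \<eta> * lam + (a - \<mu>)"
proof -
  have x: "0 \<le> x" "x \<le> lam" "x \<le> a * (1 - m)" and m: "m \<le> 1"
    using assms(1) unfolding opt2_local_feasible_def by auto
  have "\<eta> * x \<le> \<eta> * lam" using x assms(2) by (intro mult_left_mono) auto
  moreover have "(1 - \<eta>) * x \<le> (1 - \<eta>) * (a * (1 - m))" using x assms(3) by (intro mult_left_mono) auto
  moreover have "(1 - m) * (\<mu> - \<eta> * a) \<le> 0" using m assms(4) by (intro mult_nonneg_nonpos) auto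
  ultimately show ?thesis by (simp add: algebra_simps)
qed

lemma opt2_local_bound_uncached:
  assumes "opt2_local_feasible a m lam x" "0 \<le> \<eta>" "\<eta> \<le> 1" "1 + a \<le> \<mu> + \<eta>"
  shows "a * m + x \<le> \<mu> * m + \<eta> * lam"
proof -
  have x: "0 \<le> x" "x \<le> lam" "lam \<le> m" and m: "0 \<le> m"
    using assms(1) unfolding opt2_local_feasible_def by auto
  have "\<eta> * x \<le> \<eta> * lam" using x assms(2) by (intro mult_left_mono) auto
  moreover have "(1 - \<eta>) * x \<le> (1 - \<eta>) * m" using x assms(3) by (intro mult_left_mono) auto
  moreover have "(1 + a - \<mu> - \<eta>) * m \<le> 0" using m assms(4) by (intro mult_nonpos_nonneg) auto
  ultimately show ?thesis by (simp add: algebra_simps)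
qed

text \<open>Split x = p x + q x + \<eta> x and bound the three parts by m, a (1 - m) and lam; the
  weight q is chosen so that the coefficient of m cancels.\<close>

lemma opt2_local_bound_partial:
  assumes "opt2_local_feasible a m lam x" "0 \<le> a" "0 \<le> \<eta>" "\<eta> * a \<le> \<mu>" "\<mu> + \<eta> \<le> 1 + a"
  shows "a * m + x \<le> \<mu> * m + \<eta> * lam + (1 + a - \<mu> - \<eta>) * a / (1 + a)"
proof -
  define q where "q = (1 + a - \<mu> - \<eta>) / (1 + a)"
  define p where "p = 1 - \<eta> - q"
  have x: "0 \<le> x" "x \<le> lam" "lam \<le> m" "x \<le> a * (1 - m)"
    using assms(1) unfolding opt2_local_feasible_def by auto
  have q_eq: "q * (1 + a) = 1 + a - \<mu> - \<eta>" unfolding q_def using assms(2) by simp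
  have "0 \<le> q" unfolding q_def using assms(2,5) by simp
  have "0 \<le> p * (1 + a)" unfolding p_def using q_eq assms(4) by (simp add: algebra_simps)
  then have "0 \<le> p" using assms(2) by (simp add: zero_le_mult_iff)
  have "\<eta> * x \<le> \<eta> * lam" using x assms(3) by (intro mult_left_mono) auto
  moreover have "p * x \<le> p * m" using x \<open>0 \<le> p\<close> by (intro mult_left_mono) auto
  moreover have "q * x \<le> q * (a * (1 - m))" using x \<open>0 \<le> q\<close> by (intro mult_left_mono) auto
  moreover have "a * m + x = (p * x + q * x + \<eta> * x) + a * m" unfolding p_def by (simp add: algebra_simps)
  moreover have "p * m + q * (a * (1 - m)) + a * m = \<mu> * m + q * a"
  proof -
    have "(1 + a - \<eta> - q * (1 + a)) * m = \<mu> * m" using q_eq by simp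
    then show ?thesis unfolding p_def by (simp add: algebra_simps)
  qed
  ultimately have "a * m + x \<le> \<mu> * m + \<eta> * lam + q * a" by linarith
  then show ?thesis unfolding q_def by simp
qed

text \<open>Weak LP duality, with multiplier \<mu> for the cache constraint, \<eta> \<ge> 0 for the
  bandwidth constraint and h c bounding the Lagrangian of content c over its local polytope.\<close>

lemma opt2_optimal_by_certificate:
  fixes \<mu> \<eta> :: real and h :: "nat \<Rightarrow> real"
  assumes feasible: "opt2_feasible C M r m lam x"
    and lam_sum: "(\<Sum>c=1..C. lam c) = 1"
    and eta_nonneg: "0 \<le> \<eta>"
    and tight: "\<And>c. c \<in> {1..C} \<Longrightarrow> r c * m c + x c = \<mu> * m c + \<eta> * lam c + h c"
    and bound: "\<And>c m' lam' x'. c \<in> {1..C} \<Longrightarrow> opt2_local_feasible (r c) m' lam' x' \<Longrightarrow>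
                  r c * m' + x' \<le> \<mu> * m' + \<eta> * lam' + h c"
  shows "opt2_optimal C M r m lam x"
  unfolding opt2_optimal_def
proof (intro conjI allI impI feasible)
  fix m' lam' x' assume feasible': "opt2_feasible C M r m' lam' x'"
  have dual: "(\<Sum>c=1..C. \<mu> * m c + \<eta> * lam c + h c) =
      \<mu> * (\<Sum>c=1..C. m c) + \<eta> * (\<Sum>c=1..C. lam c) + sum h {1..C}" for m lam :: "nat \<Rightarrow> real"
    by (simp add: sum.distrib sum_distrib_left)
  have "opt2_obj C r m' x' \<le> (\<Sum>c=1..C. \<mu> * m' c + \<eta> * lam' c + h c)"
    unfolding opt2_obj_def using feasible' bound by (intro sum_mono) (auto simp: opt2_feasible_iff_local)
  also have "\<dots> \<le> \<mu> * real M + \<eta> + sum h {1..C}"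
    using feasible' eta_nonneg mult_left_mono[of _ 1 \<eta>] unfolding dual opt2_feasible_def by auto
  also have "\<dots> = (\<Sum>c=1..C. \<mu> * m c + \<eta> * lam c + h c)"
    using feasible lam_sum unfolding dual opt2_feasible_def by simp
  also have "\<dots> = opt2_obj C r m x"
    unfolding opt2_obj_def using tight by simp
  finally show "opt2_obj C r m' x' \<le> opt2_obj C r m x" .
qed

lemma opt2_lx_eq_tail:
  assumes "1 \<le> M" "M \<le> cs" "1 \<le> c"
  shows "opt2_lx r M cs c = opt2_tail r M cs c"
  using assms unfolding opt2_lx_def opt2_tail_def by auto

lemma opt2_m_eq_tail:
  assumes "1 \<le> M" "M \<le> cs" "1 \<le> c"
  shows "opt2_m r M cs c = (if c < M then 1 else 0) + opt2_tail r M cs c"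
  using assms unfolding opt2_m_def opt2_tail_def by auto

lemma sum_opt2_tail:
  assumes "1 \<le> M" "M \<le> cs" "cs + 1 \<le> C"
  shows "(\<Sum>c=1..C. opt2_tail r M cs c) = 1"
proof -
  have "(\<Sum>c=1..C. opt2_tail r M cs c) = (\<Sum>c=M..cs+1. opt2_tail r M cs c)"
    using assms by (intro sum.mono_neutral_right) (auto simp: opt2_tail_def)
  also have "\<dots> = (\<Sum>c=M..cs. opt2_tail r M cs c) + opt2_tail r M cs (cs + 1)"
    using assms by simp
  also have "\<dots> = 1"
    unfolding opt2_tail_def by simp
  finally show ?thesis .
qed

lemma sum_opt2_lx:
  assumes "1 \<le> M" "M \<le> cs" "cs + 1 \<le> C"
  shows "(\<Sum>c=1..C. opt2_lx r M cs c) = 1"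
proof -
  have "(\<Sum>c=1..C. opt2_lx r M cs c) = (\<Sum>c=1..C. opt2_tail r M cs c)"
    using assms by (intro sum.cong) (auto simp: opt2_lx_eq_tail)
  with sum_opt2_tail[OF assms] show ?thesis by simp
qed

lemma sum_opt2_m:
  assumes "1 \<le> M" "M \<le> cs" "cs + 1 \<le> C"
  shows "(\<Sum>c=1..C. opt2_m r M cs c) = real M"
proof -
  have "{c \<in> {1..C}. c < M} = {1..<M}" using assms by auto
  then have "(\<Sum>c=1..C. if c < M then 1 else 0) = real (M - 1)"
    by (simp flip: sum.inter_filter)
  moreover have "(\<Sum>c=1..C. opt2_m r M cs c)
      = (\<Sum>c=1..C. if c < M then 1 else 0) + (\<Sum>c=1..C. opt2_tail r M cs c)"
    using assms by (simp add: opt2_m_eq_tail sum.distrib)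
  ultimately show ?thesis
    using sum_opt2_tail[OF assms] assms by (simp add: of_nat_diff)
qed

lemma opt2_candidate_feasible:
  assumes r_nonneg: "\<And>c. c \<in> {1..C} \<Longrightarrow> 0 \<le> r c"
    and M: "1 \<le> M" "M \<le> cs" "cs + 1 \<le> C"
    and below: "(\<Sum>c=M..cs. r c / (1 + r c)) \<le> 1"
    and above: "(\<Sum>c=M..cs+1. r c / (1 + r c)) > 1"
  shows "opt2_feasible C M r (opt2_m r M cs) (opt2_lx r M cs) (opt2_lx r M cs)"
  unfolding opt2_feasible_iff_local
proof (intro conjI ballI sum_opt2_m M)
  show "(\<Sum>c=1..C. opt2_lx r M cs c) \<le> 1" using sum_opt2_lx[OF M] by simp
next
  fix c assume c: "c \<in> {1..C}"
  then have a: "0 \<le> r c" by (rule r_nonneg)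
  show "opt2_local_feasible (r c) (opt2_m r M cs c) (opt2_lx r M cs c) (opt2_lx r M cs c)"
  proof (cases "c < M")
    case True
    then show ?thesis using c M unfolding opt2_m_def opt2_lx_def opt2_local_feasible_def by auto
  next
    case False
    then have "opt2_m r M cs c = opt2_tail r M cs c" "opt2_lx r M cs c = opt2_tail r M cs c"
      using c M by (simp_all add: opt2_m_eq_tail opt2_lx_eq_tail)
    moreover have "0 \<le> opt2_tail r M cs c \<and> opt2_tail r M cs c * (1 + r c) \<le> r c"
    proof -
      consider "c \<le> cs" | "c = cs + 1" | "cs + 1 < c" by linarith
      then show ?thesis
      proof cases
        case 1
        then show ?thesis using False a by (simp add: opt2_tail_def)
      next
        case 2
        have "1 - (\<Sum>c=M..cs. r c / (1 + r c)) < r c / (1 + r c)"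
          using above M 2 by simp
        then show ?thesis using below a 2 by (simp add: opt2_tail_def field_simps)
      next
        case 3
        then show ?thesis using a by (simp add: opt2_tail_def)
      qed
    qed
    ultimately show ?thesis using a by (simp add: opt2_local_feasible_diagI)
  qed
qed

definition opt2_dual_term :: "(nat \<Rightarrow> real) \<Rightarrow> nat \<Rightarrow> nat \<Rightarrow> real \<Rightarrow> real \<Rightarrow> nat \<Rightarrow> real" where
  "opt2_dual_term r M cs \<mu> \<eta> c =
     (if c < M then r c - \<mu>
      else if c \<le> cs then (1 + r c - \<mu> - \<eta>) * r c / (1 + r c)
      else 0)"

lemma opt2_candidate_tight:
  assumes "1 \<le> M" "M \<le> cs" "1 \<le> c" "\<mu> + \<eta> = 1 + r (cs + 1)"
  shows "r c * opt2_m r M cs c + opt2_lx r M cs c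
           = \<mu> * opt2_m r M cs c + \<eta> * opt2_lx r M cs c + opt2_dual_term r M cs \<mu> \<eta> c"
proof -
  consider "c < M" | "M \<le> c" "c \<le> cs" | "c = cs + 1" | "cs + 1 < c" by linarith
  then show ?thesis
  proof cases
    case 2
    define q where "q = r c / (1 + r c)"
    have "opt2_m r M cs c = q" "opt2_lx r M cs c = q"
      "opt2_dual_term r M cs \<mu> \<eta> c = (1 + r c - \<mu> - \<eta>) * q"
      using 2 assms unfolding opt2_m_def opt2_lx_def opt2_tail_def opt2_dual_term_def q_def by auto
    then show ?thesis by (simp add: algebra_simps)
  next
    case 3
    define t where "t = opt2_tail r M cs c"
    have "opt2_m r M cs c = t" "opt2_lx r M cs c = t" "opt2_dual_term r M cs \<mu> \<eta> c = 0"
      using 3 assms unfolding opt2_m_def opt2_lx_def opt2_dual_term_def t_def by auto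
    moreover have "(\<mu> + \<eta>) * t = (1 + r c) * t" using 3 assms(4) by simp
    ultimately show ?thesis by (simp add: algebra_simps)
  qed (use assms in \<open>auto simp: opt2_m_def opt2_lx_def opt2_tail_def opt2_dual_term_def\<close>)
qed

lemma opt2_candidate_dual_bound:
  assumes r: "antimono_on {1..C} r" "\<And>c. c \<in> {1..C} \<Longrightarrow> 0 \<le> r c"
    and M: "1 \<le> M" "M \<le> cs" "cs + 1 \<le> C"
    and \<eta>: "0 \<le> \<eta>" "\<eta> \<le> 1" and \<mu>: "\<mu> = \<eta> * r M" "\<mu> + \<eta> = 1 + r (cs + 1)"
    and c: "c \<in> {1..C}" and local: "opt2_local_feasible (r c) m lam x"
  shows "r c * m + x \<le> \<mu> * m + \<eta> * lam + opt2_dual_term r M cs \<mu> \<eta> c"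
proof -
  have r_le: "r j \<le> r i" if "1 \<le> i" "i \<le> j" "j \<le> C" for i j
    using monotone_onD[OF r(1), of i j] that by simp
  consider "c < M" | "M \<le> c" "c \<le> cs" | "cs < c" by linarith
  then show ?thesis
  proof cases
    case 1
    then have "\<mu> \<le> \<eta> * r c" using \<mu>(1) \<eta>(1) c M r_le[of c M] by (simp add: mult_left_mono)
    then show ?thesis
      using 1 opt2_local_bound_cached[OF local \<eta>] unfolding opt2_dual_term_def by simp
  next
    case 2
    then have "\<eta> * r c \<le> \<mu>" using \<mu>(1) \<eta>(1) c M r_le[of M c] by (simp add: mult_left_mono)
    moreover have "\<mu> + \<eta> \<le> 1 + r c" using \<mu>(2) 2 c M r_le[of c "cs + 1"] by simp
    ultimately show ?thesis
      using 2 opt2_local_bound_partial[OF local r(2)[OF c] \<eta>(1)] unfolding opt2_dual_term_def by simp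
  next
    case 3
    then have "1 + r c \<le> \<mu> + \<eta>" using \<mu>(2) c r_le[of "cs + 1" c] by simp
    then show ?thesis
      using 3 M opt2_local_bound_uncached[OF local \<eta>] unfolding opt2_dual_term_def by simp
  qed
qed

lemma opt2_candidate_optimal:
  assumes r: "antimono_on {1..C} r" "\<And>c. c \<in> {1..C} \<Longrightarrow> 0 \<le> r c"
    and M: "1 \<le> M" "cs + 1 \<le> C"
    and below: "(\<Sum>c=M..cs. r c / (1 + r c)) \<le> 1"
    and above: "(\<Sum>c=M..cs+1. r c / (1 + r c)) > 1"
  shows "opt2_optimal C M r (opt2_m r M cs) (opt2_lx r M cs) (opt2_lx r M cs)"
proof -
  define K where "K = r (cs + 1)"
  have K: "0 \<le> K" unfolding K_def using M by (intro r(2)) auto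
  have "M \<le> cs"
  proof (rule ccontr)
    assume "\<not> M \<le> cs"
    then have "(\<Sum>c=M..cs+1. r c / (1 + r c)) \<le> K / (1 + K)"
      using K unfolding K_def by (cases "M = cs + 1") auto
    moreover have "K / (1 + K) < 1" using K by simp
    ultimately show False using above by linarith
  qed
  define \<eta> where "\<eta> = (1 + K) / (1 + r M)"
  define \<mu> where "\<mu> = \<eta> * r M"
  have "K \<le> r M" unfolding K_def using monotone_onD[OF r(1), of M "cs + 1"] M \<open>M \<le> cs\<close> by simp
  then have \<eta>: "0 \<le> \<eta>" "\<eta> \<le> 1" unfolding \<eta>_def using K by auto
  have "\<mu> + \<eta> = \<eta> * (1 + r M)" unfolding \<mu>_def by (simp add: algebra_simps)
  also have "\<dots> = 1 + K" unfolding \<eta>_def using K \<open>K \<le> r M\<close> by simp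
  finally have \<mu>\<eta>: "\<mu> + \<eta> = 1 + K" .
  note M' = M(1) \<open>M \<le> cs\<close> M(2)
  show ?thesis
  proof (rule opt2_optimal_by_certificate[where \<mu> = \<mu> and \<eta> = \<eta> and h = "opt2_dual_term r M cs \<mu> \<eta>"])
    show "opt2_feasible C M r (opt2_m r M cs) (opt2_lx r M cs) (opt2_lx r M cs)"
      using opt2_candidate_feasible[OF r(2) M' below above] .
    show "(\<Sum>c=1..C. opt2_lx r M cs c) = 1" using sum_opt2_lx[OF M'] .
    fix c assume "c \<in> {1..C}"
    then show "r c * opt2_m r M cs c + opt2_lx r M cs c =
        \<mu> * opt2_m r M cs c + \<eta> * opt2_lx r M cs c + opt2_dual_term r M cs \<mu> \<eta> c"
      using opt2_candidate_tight[OF M'(1,2), of c \<mu> \<eta> r] \<mu>\<eta> by (simp add: K_def)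
  next
    fix c m lam x assume "c \<in> {1..C}" "opt2_local_feasible (r c) m lam x"
    then show "r c * m + x \<le> \<mu> * m + \<eta> * lam + opt2_dual_term r M cs \<mu> \<eta> c"
      using opt2_candidate_dual_bound[OF r M' \<eta> \<mu>_def] \<mu>\<eta> by (simp add: K_def)
  qed (use \<eta> in simp)
qed

theorem theorem2:
  fixes C M cs :: nat and \<nu> :: "nat \<Rightarrow> real" and \<rho> :: real
  assumes nonincr: "\<And>c. 1 \<le> c \<Longrightarrow> c < C \<Longrightarrow> \<nu> (Suc c) \<le> \<nu> c"
    and pos: "\<And>c. 1 \<le> c \<Longrightarrow> c \<le> C \<Longrightarrow> 0 < \<nu> c"
    and norm: "(\<Sum>c=1..C. \<nu> c) = 1"
    and rho_pos: "0 < \<rho>"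
    and M_ge: "1 \<le> M"
    and cs_le: "cs + 1 \<le> C"
    and cs1: "(\<Sum>c=M..cs. (\<rho> * \<nu> c) / (1 + \<rho> * \<nu> c)) \<le> 1"
    and cs2: "(\<Sum>c=M..cs+1. (\<rho> * \<nu> c) / (1 + \<rho> * \<nu> c)) > 1"
  shows "opt2_optimal C M (\<lambda>c. \<rho> * \<nu> c)
           (opt2_m (\<lambda>c. \<rho> * \<nu> c) M cs)
           (opt2_lx (\<lambda>c. \<rho> * \<nu> c) M cs)
           (opt2_lx (\<lambda>c. \<rho> * \<nu> c) M cs)"
proof (rule opt2_candidate_optimal[OF _ _ M_ge cs_le cs1 cs2])
  show "antimono_on {1..C} (\<lambda>c. \<rho> * \<nu> c)"
    using nonincr rho_pos by (intro antimono_on_atLeastAtMostI mult_left_mono) auto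
  show "0 \<le> \<rho> * \<nu> c" if "c \<in> {1..C}" for c
    using pos[of c] rho_pos that by simp
qed

end
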